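(* Let $\mathcal L$ be an expansion of the language of ordered groups and let $G$ be an $\mathcal L$-structure whose reduct is a densely ordered abelian group. If $G$ satisfies the scheme DCI, then the group $G$ is divisible.
   Context: For an $\mathcal L$-formula $\varphi(v,\bar w)$, $\mathrm{DCI}_\varphi$ is the sentence $\forall\bar w\Big(\big(\exists s\,\forall v<s\,\varphi(v,\bar w)\ \wedge\ \forall v\big(\forall s<v\,\varphi(s,\bar w)\to\exists u>v\,\forall s<u\,\varphi(s,\bar w)\big)\big)\to\forall v\,\varphi(v,\bar w)\Big)$, and DCI is the scheme $\{\mathrm{DCI}_\varphi:\varphi(v,\bar w)\text{ an }\mathcal L\text{-formula}\}$. Divisible means: for every $g\in G$ and integer $n\ge1$ there is $h\in G$ with $nh=g$. *)

theory Defs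
  imports Main
begin

datatype 'f trm = Var nat | Zero | Plus "'f trm" "'f trm" | Neg "'f trm" | Fn 'f "'f trm list"

datatype ('f, 'r) fm =
    Eq "'f trm" "'f trm"
  | Less "'f trm" "'f trm"
  | Rel 'r "'f trm list"
  | FFalse
  | Not "('f, 'r) fm"
  | And "('f, 'r) fm" "('f, 'r) fm"
  | Ex nat "('f, 'r) fm"

primrec eval :: "('f \<Rightarrow> 'a list \<Rightarrow> 'a) \<Rightarrow> (nat \<Rightarrow> 'a) \<Rightarrow> 'f trm \<Rightarrow> 'a::ab_group_add" where
  "eval F e (Var i) = e i"
| "eval F e Zero = 0"
| "eval F e (Plus s t) = eval F e s + eval F e t"
| "eval F e (Neg t) = - eval F e t"
| "eval F e (Fn f ts) = F f (map (eval F e) ts)"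

primrec sat :: "('f \<Rightarrow> 'a::linordered_ab_group_add list \<Rightarrow> 'a) \<Rightarrow> ('r \<Rightarrow> 'a list \<Rightarrow> bool) \<Rightarrow> (nat \<Rightarrow> 'a)
    \<Rightarrow> ('f, 'r) fm \<Rightarrow> bool" where
  "sat F R e (Eq s t) = (eval F e s = eval F e t)"
| "sat F R e (Less s t) = (eval F e s < eval F e t)"
| "sat F R e (Rel r ts) = R r (map (eval F e) ts)"
| "sat F R e FFalse = False"
| "sat F R e (Not \<phi>) = (\<not> sat F R e \<phi>)"
| "sat F R e (And \<phi> \<psi>) = (sat F R e \<phi> \<and> sat F R e \<psi>)"
| "sat F R e (Ex i \<phi>) = (\<exists>x. sat F R (e(i := x)) \<phi>)"

text \<open>The structure (universe = the type 'a, interpretations F, R) satisfies DCI for the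
  formula \<phi> with distinguished variable v; all other variables are the parameters w.\<close>
definition DCI :: "('f \<Rightarrow> 'a::linordered_ab_group_add list \<Rightarrow> 'a) \<Rightarrow> ('r \<Rightarrow> 'a list \<Rightarrow> bool) \<Rightarrow> ('f, 'r) fm \<Rightarrow> nat
    \<Rightarrow> bool" where
  "DCI F R \<phi> v \<longleftrightarrow> (\<forall>e :: nat \<Rightarrow> 'a.
     ((\<exists>s. \<forall>x<s. sat F R (e(v := x)) \<phi>) \<and>
      (\<forall>x. (\<forall>s<x. sat F R (e(v := s)) \<phi>) \<longrightarrow> (\<exists>u>x. \<forall>s<u. sat F R (e(v := s)) \<phi>)))
     \<longrightarrow> (\<forall>x. sat F R (e(v := x)) \<phi>))"

primrec nmul :: "nat \<Rightarrow> 'a::monoid_add \<Rightarrow> 'a" where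
  "nmul 0 h = 0"
| "nmul (Suc n) h = h + nmul n h"

end

theory Submission
  imports Defs
begin

text \<open>Fix \<open>n \<ge> 1\<close> and suppose \<open>g\<close> is not of the form \<open>n h\<close>. In a densely ordered group the
  map \<open>x \<mapsto> n x\<close> is strictly increasing and \<open>n \<delta>\<close> can be made smaller than any positive
  element, so the definable set \<open>{x. n x < g}\<close> contains all sufficiently negative \<open>x\<close> and,
  whenever it contains everything below \<open>x\<close>, it contains everything below some \<open>u > x\<close>
  (otherwise \<open>n x\<close> would have to equal \<open>g\<close>). DCI for the formula \<open>n v < w\<close> then makes
  this set the whole group, which fails at \<open>x = max 0 g\<close>.\<close>

lemma nmul_zero [simp]: "nmul n (0::'a::monoid_add) = 0"
  by (induction n) simp_all

lemma nmul_mono: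
  fixes a b :: "'a::ordered_comm_monoid_add"
  shows "a \<le> b \<Longrightarrow> nmul n a \<le> nmul n b"
  by (induction n) (auto intro: add_mono)

lemma nmul_strict_mono:
  fixes a b :: "'a::ordered_cancel_comm_monoid_add"
  assumes "0 < n" "a < b"
  shows "nmul n a < nmul n b"
proof -
  obtain m where "n = Suc m" using assms(1) by (cases n) auto
  then show ?thesis using assms(2) nmul_mono[of a b m] by (simp add: add_less_le_mono)
qed

lemma nmul_ge_self:
  fixes a :: "'a::ordered_comm_monoid_add"
  assumes "0 < n" "0 \<le> a"
  shows "a \<le> nmul n a"
proof -
  obtain m where "n = Suc m" using assms(1) by (cases n) auto
  moreover have "0 \<le> nmul m a" using nmul_mono[OF assms(2), of m] by simp
  ultimately show ?thesis by (simp add: add_increasing2)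
qed

lemma nmul_le_self:
  fixes a :: "'a::ordered_comm_monoid_add"
  assumes "0 < n" "a \<le> 0"
  shows "nmul n a \<le> a"
proof -
  obtain m where "n = Suc m" using assms(1) by (cases n) auto
  moreover have "nmul m a \<le> 0" using nmul_mono[OF assms(2), of m] by simp
  ultimately show ?thesis by (simp add: add_decreasing2)
qed

lemma nmul_add:
  fixes a b :: "'a::comm_monoid_add"
  shows "nmul n (a + b) = nmul n a + nmul n b"
  by (induction n) (simp_all add: algebra_simps)

lemma nmul_diff:
  fixes a b :: "'a::ab_group_add"
  shows "nmul n (a - b) = nmul n a - nmul n b"
  using nmul_add[of n "a - b" b] by (simp add: algebra_simps)

lemma exists_pos_double_le:
  fixes \<epsilon> :: "'a::linordered_ab_group_add"
  assumes dense: "\<And>x y :: 'a. x < y \<Longrightarrow> \<exists>z. x < z \<and> z < y"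
    and "0 < \<epsilon>"
  shows "\<exists>\<eta>>0. \<eta> + \<eta> \<le> \<epsilon>"
proof -
  obtain d where "0 < d" "d < \<epsilon>" using dense[OF \<open>0 < \<epsilon>\<close>] by blast
  then show ?thesis
    by (intro exI[of _ "min d (\<epsilon> - d)"]) (auto simp: min_def algebra_simps)
qed

lemma exists_pos_nmul_less:
  fixes \<epsilon> :: "'a::linordered_ab_group_add"
  assumes dense: "\<And>x y :: 'a. x < y \<Longrightarrow> \<exists>z. x < z \<and> z < y"
    and "0 < \<epsilon>"
  shows "\<exists>\<delta>>0. nmul n \<delta> < \<epsilon>"
proof -
  \<comment> \<open>The extra conjunct \<open>\<delta> < \<epsilon>\<close> is what lets the induction pass from \<open>n\<close> to \<open>Suc n\<close>.\<close>
  have "\<exists>\<delta>>0. \<delta> < \<epsilon> \<and> nmul n \<delta> < \<epsilon>" using \<open>0 < \<epsilon>\<close>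
  proof (induction n arbitrary: \<epsilon>)
    case 0
    then show ?case using dense by fastforce
  next
    case (Suc n)
    obtain \<eta> where \<eta>: "0 < \<eta>" "\<eta> + \<eta> \<le> \<epsilon>"
      using exists_pos_double_le[OF dense Suc.prems] by blast
    then obtain \<delta> where \<delta>: "0 < \<delta>" "\<delta> < \<eta>" "nmul n \<delta> < \<eta>"
      using Suc.IH by blast
    have "nmul (Suc n) \<delta> < \<eta> + \<eta>" using \<delta> by (simp add: add_strict_mono)
    moreover have "\<delta> < \<eta> + \<eta>" using \<delta> by (simp add: add_strict_increasing)
    ultimately show ?case using \<delta>(1) \<eta>(2) by (auto intro: less_le_trans)
  qed
  then show ?thesis by blast
qed

lemma nmul_less_cut_open:
  fixes g x :: "'a::linordered_ab_group_add"
  assumes dense: "\<And>x y :: 'a. x < y \<Longrightarrow> \<exists>z. x < z \<and> z < y"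
    and "0 < n"
    and not_multiple: "\<And>h. nmul n h \<noteq> g"
    and below: "\<And>s. s < x \<Longrightarrow> nmul n s < g"
  shows "\<exists>u>x. \<forall>s<u. nmul n s < g"
proof (cases "nmul n x < g")
  case True
  then obtain \<delta> where \<delta>: "0 < \<delta>" "nmul n \<delta> < g - nmul n x"
    using exists_pos_nmul_less[OF dense, of "g - nmul n x" n] by auto
  have "nmul n s < g" if "s < x + \<delta>" for s
  proof -
    have "nmul n s < nmul n (x + \<delta>)" using nmul_strict_mono[OF \<open>0 < n\<close> that] .
    then show ?thesis using \<delta>(2) by (simp add: nmul_add algebra_simps)
  qed
  then show ?thesis using \<delta>(1) by (intro exI[of _ "x + \<delta>"]) auto
next
  case False
  then have "g < nmul n x" using not_multiple[of x] by auto
  then obtain \<delta> where \<delta>: "0 < \<delta>" "nmul n \<delta> < nmul n x - g"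
    using exists_pos_nmul_less[OF dense, of "nmul n x - g" n] by auto
  have "nmul n (x - \<delta>) < g" using below \<delta>(1) by simp
  with \<delta>(2) have False by (simp add: nmul_diff algebra_simps)
  then show ?thesis ..
qed

primrec nmul_trm :: "nat \<Rightarrow> 'f trm" where
  "nmul_trm 0 = Zero"
| "nmul_trm (Suc n) = Plus (Var 0) (nmul_trm n)"

lemma eval_nmul_trm: "eval F e (nmul_trm n) = nmul n (e 0)"
  by (induction n) auto

theorem corollary3p3:
  fixes F :: "'f \<Rightarrow> 'a list \<Rightarrow> 'a::linordered_ab_group_add"
    and R :: "'r \<Rightarrow> 'a list \<Rightarrow> bool"
  assumes dense: "\<forall>x y :: 'a. x < y \<longrightarrow> (\<exists>z. x < z \<and> z < y)"
    and dci: "\<forall>(\<phi> :: ('f, 'r) fm) v. DCI F R \<phi> v"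
  shows "\<forall>(g :: 'a) (n :: nat). n \<ge> 1 \<longrightarrow> (\<exists>h. nmul n h = g)"
proof (intro allI impI)
  fix g :: 'a and n :: nat
  assume "n \<ge> 1"
  then have n: "0 < n" by simp
  show "\<exists>h. nmul n h = g"
  proof (rule ccontr)
    assume "\<not> (\<exists>h. nmul n h = g)"
    then have not_multiple: "\<And>h. nmul n h \<noteq> g" by blast
    define \<phi> :: "('f, 'r) fm" where "\<phi> = Less (nmul_trm n) (Var 1)"
    define e :: "nat \<Rightarrow> 'a" where "e = (\<lambda>_. g)"
    have sat_\<phi>: "sat F R (e(0 := x)) \<phi> \<longleftrightarrow> nmul n x < g" for x
      by (simp add: \<phi>_def e_def eval_nmul_trm)
    have "\<forall>x<min 0 g. nmul n x < g"
      using nmul_le_self[OF n] by (metis le_less_trans less_imp_le min_less_iff_conj)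
    moreover have "\<forall>x. (\<forall>s<x. nmul n s < g) \<longrightarrow> (\<exists>u>x. \<forall>s<u. nmul n s < g)"
      using nmul_less_cut_open[OF _ n not_multiple] dense by blast
    ultimately have "\<forall>x. nmul n x < g"
      using dci unfolding DCI_def sat_\<phi>[symmetric] by blast
    then have "nmul n (max 0 g) < g" ..
    moreover have "max 0 g \<le> nmul n (max 0 g)" by (rule nmul_ge_self[OF n max.cobounded1])
    ultimately show False by (meson max.cobounded2 order.trans not_less)
  qed
qed

end
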